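(* Let $(M_1,M_2)$ be a state of a duplex network. Every shortest CLAP admits a choice of witness alternating paths that are pairwise edge-disjoint within each layer; consequently, the batched symmetric-difference operation (replacing each $M_\ell$ by $M_\ell\triangle\bigcup E(p)$, the union over the witness paths $p$ of the layer-$\ell$ segments) is well-defined.
   Context: A duplex network consists of directed graphs $G_1=(V,E_1)$, $G_2=(V,E_2)$ on a common finite node set $V$. For $\ell\in\{1,2\}$, $\mathcal B_\ell$ is the bipartite graph with vertex classes $V^+=\{v^+\}$, $V^-=\{v^-\}$ and an edge $\{u^+,v^-\}$ for each $(u,v)\in E_\ell$. A state is a pair of matchings $M_\ell$ in $\mathcal B_\ell$; $D_\ell=\{v\in V: v^-\text{ uncovered by }M_\ell\}$, $\mathrm{DD}_1=D_1\setminus D_2$, $\mathrm{DD}_2=D_2\setminus D_1$. An admissible segment $(u\xrightarrow{\ell}v)$ requires an $M_\ell$-alternating path (simple path in $\mathcal B_\ell$ alternating between $M_\ell$ and non-$M_\ell$ edges) between $u^-$ and $v^-$, called a witness path, and: for $\ell=1$, $u\in D_1$, $v\notin D_1$; for $\ell=2$, $u\notin D_2$, $v\in D_2$. A CLAP is a sequence of admissible segments $v_0\xrightarrow{\ell_1}v_1\cdots\xrightarrow{\ell_k}v_k$ with $v_0\in\mathrm{DD}_1$, $v_k\in\mathrm{DD}_2$, $\ell_{i+1}\ne\ell_i$ for all $i$, and $v_0,\dots,v_k$ pairwise distinct; a shortest CLAP is one with the minimum number $k$ of segments. *)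

theory Defs
  imports Main
begin

text \<open>Vertices of the bipartite graph B_l: v^+ is Plus v, v^- is Minus v.
  The bipartite edge {u^+, v^-} is encoded by the pair (u,v), i.e. by the
  directed edge (u,v) of the layer graph it comes from.\<close>

datatype 'v side = Plus 'v | Minus 'v

definition badj :: "('v \<times> 'v) set \<Rightarrow> 'v side \<Rightarrow> 'v side \<Rightarrow> bool" where
  "badj E x y \<longleftrightarrow> (\<exists>a b. ((x = Plus a \<and> y = Minus b) \<or> (x = Minus b \<and> y = Plus a)) \<and> (a, b) \<in> E)"

fun bedge :: "'v side \<Rightarrow> 'v side \<Rightarrow> 'v \<times> 'v" where
  "bedge (Plus a) (Minus b) = (a, b)"
| "bedge (Minus b) (Plus a) = (a, b)"
| "bedge _ _ = undefined"

definition path_edges :: "'v side list \<Rightarrow> ('v \<times> 'v) list" where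
  "path_edges p = map (\<lambda>(x, y). bedge x y) (zip p (tl p))"

definition is_matching :: "('v \<times> 'v) set \<Rightarrow> ('v \<times> 'v) set \<Rightarrow> bool" where
  "is_matching E M \<longleftrightarrow> M \<subseteq> E
     \<and> (\<forall>a b b'. (a, b) \<in> M \<longrightarrow> (a, b') \<in> M \<longrightarrow> b = b')
     \<and> (\<forall>a a' b. (a, b) \<in> M \<longrightarrow> (a', b) \<in> M \<longrightarrow> a = a')"

definition alt_path :: "('v \<times> 'v) set \<Rightarrow> ('v \<times> 'v) set \<Rightarrow> 'v side list \<Rightarrow> 'v side \<Rightarrow> 'v side \<Rightarrow> bool" where
  "alt_path E M p x y \<longleftrightarrow> p \<noteq> [] \<and> hd p = x \<and> last p = y \<and> distinct p
     \<and> (\<forall>i. Suc i < length p \<longrightarrow> badj E (p ! i) (p ! Suc i))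
     \<and> (\<forall>i. Suc i < length (path_edges p) \<longrightarrow>
            ((path_edges p ! i \<in> M) \<noteq> (path_edges p ! Suc i \<in> M)))"

text \<open>Nodes v with v^- uncovered by M.\<close>
definition Dset :: "'v set \<Rightarrow> ('v \<times> 'v) set \<Rightarrow> 'v set" where
  "Dset V M = {v \<in> V. \<forall>u. (u, v) \<notin> M}"

definition lay :: "nat \<Rightarrow> 'a \<Rightarrow> 'a \<Rightarrow> 'a" where
  "lay l x1 x2 = (if l = 1 then x1 else x2)"

definition admissible ::
  "'v set \<Rightarrow> ('v \<times> 'v) set \<Rightarrow> ('v \<times> 'v) set \<Rightarrow> ('v \<times> 'v) set \<Rightarrow> ('v \<times> 'v) set
   \<Rightarrow> 'v \<Rightarrow> nat \<Rightarrow> 'v \<Rightarrow> bool" where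
  "admissible V E1 E2 M1 M2 u l v \<longleftrightarrow> u \<in> V \<and> v \<in> V \<and>
     (\<exists>p. alt_path (lay l E1 E2) (lay l M1 M2) p (Minus u) (Minus v)) \<and>
     ((l = 1 \<and> u \<in> Dset V M1 \<and> v \<notin> Dset V M1) \<or>
      (l = 2 \<and> u \<notin> Dset V M2 \<and> v \<in> Dset V M2))"

text \<open>A CLAP given by its node list vs = [v_0,...,v_k] and layer list
  ls = [l_1,...,l_k] (segment i goes from vs!i to vs!(i+1) in layer ls!i).\<close>
definition is_CLAP ::
  "'v set \<Rightarrow> ('v \<times> 'v) set \<Rightarrow> ('v \<times> 'v) set \<Rightarrow> ('v \<times> 'v) set \<Rightarrow> ('v \<times> 'v) set
   \<Rightarrow> 'v list \<Rightarrow> nat list \<Rightarrow> bool" where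
  "is_CLAP V E1 E2 M1 M2 vs ls \<longleftrightarrow>
     length vs = Suc (length ls) \<and>
     hd vs \<in> Dset V M1 - Dset V M2 \<and>
     last vs \<in> Dset V M2 - Dset V M1 \<and>
     distinct vs \<and>
     (\<forall>i. Suc i < length ls \<longrightarrow> ls ! Suc i \<noteq> ls ! i) \<and>
     (\<forall>i < length ls. admissible V E1 E2 M1 M2 (vs ! i) (ls ! i) (vs ! Suc i))"

definition is_shortest_CLAP ::
  "'v set \<Rightarrow> ('v \<times> 'v) set \<Rightarrow> ('v \<times> 'v) set \<Rightarrow> ('v \<times> 'v) set \<Rightarrow> ('v \<times> 'v) set
   \<Rightarrow> 'v list \<Rightarrow> nat list \<Rightarrow> bool" where
  "is_shortest_CLAP V E1 E2 M1 M2 vs ls \<longleftrightarrow>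
     is_CLAP V E1 E2 M1 M2 vs ls \<and>
     (\<forall>vs' ls'. is_CLAP V E1 E2 M1 M2 vs' ls' \<longrightarrow> length ls \<le> length ls')"

end

(*
  Orient the bipartite graph of a layer so that non-matching edges point from V^- to V^+ and
  matching edges back; an alternating path starting at an uncovered v^- is then a directed path,
  and for the reversed orientation the same holds for alternating paths ending at an uncovered
  v^-. Two directed paths that share a vertex splice into a directed simple path from the start
  of the first to the end of the second, which is again an alternating path.

  In a CLAP, two segments in layer 1 both start in D_1, and two segments in layer 2 both end in
  D_2. So if the witnesses of segments i < j of the same layer met, splicing them would give an
  admissible segment v_i -> v_(j+1), and cutting out the segments in between would give a
  shorter CLAP. Hence in a shortest CLAP any choice of witnesses is vertex-disjoint within each
  layer, a fortiori edge-disjoint.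
*)
theory Submission
  imports Defs
begin

lemma successively_neq_nth_iff:
  assumes "successively (\<lambda>x y. P x \<noteq> P y) xs" and "m < length xs" and "n < length xs"
  shows "P (xs ! m) \<longleftrightarrow> (P (xs ! n) \<longleftrightarrow> even (m + n))"
proof -
  have from_hd: "P (xs ! k) \<longleftrightarrow> (P (xs ! 0) \<longleftrightarrow> even k)" if "k < length xs" for k
    using that
  proof (induction k)
    case (Suc k)
    have "P (xs ! k) \<noteq> P (xs ! Suc k)" using successively_nth[OF assms(1) Suc.prems] .
    with Suc.IH Suc.prems show ?case by simp argo
  qed simp
  show ?thesis using from_hd[OF assms(2)] from_hd[OF assms(3)] by (simp add: even_add) argo
qed

lemma successively_splice:
  assumes "successively R (xs @ x # ys)" and "successively R (us @ x # vs)"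
  shows "successively R (xs @ x # vs)"
  using assms by (auto simp: successively_append_iff successively_Cons)

lemma successively_take_append_drop:
  assumes "successively R xs" and "i \<le> j" and "j < length xs" and "xs ! i = xs ! j"
  shows "successively R (take i xs @ drop j xs)"
proof -
  have "successively R (take i xs @ xs ! i # drop (Suc i) xs)"
    using assms(1-3) by (simp add: id_take_nth_drop[symmetric])
  moreover have "successively R (take j xs @ xs ! j # drop (Suc j) xs)"
    using assms(1,3) by (simp add: id_take_nth_drop[symmetric])
  ultimately have "successively R (take i xs @ xs ! j # drop (Suc j) xs)"
    unfolding assms(4) by (rule successively_splice)
  then show ?thesis
    using assms(3) by (simp add: Cons_nth_drop_Suc)
qed

lemma distinct_successively_splice:
  assumes "distinct xs" and "distinct ys" and "successively R xs" and "successively R ys"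
    and "set xs \<inter> set ys \<noteq> {}"
  obtains zs where "zs \<noteq> []" and "hd zs = hd xs" and "last zs = last ys"
    and "distinct zs" and "successively R zs"
proof -
  obtain pre z post where xs: "xs = pre @ z # post" and z: "z \<in> set ys"
    and pre: "\<forall>w \<in> set pre. w \<notin> set ys"
    using split_list_first_prop[of xs "\<lambda>w. w \<in> set ys"] assms(5) by blast
  obtain us ws where ys: "ys = us @ z # ws"
    using z by (blast dest: split_list)
  show ?thesis
  proof (rule that[of "pre @ z # ws"])
    show "hd (pre @ z # ws) = hd xs"
      by (simp add: xs hd_append)
    show "last (pre @ z # ws) = last ys"
      by (simp add: ys)
    show "distinct (pre @ z # ws)"
      using assms(1,2) pre by (auto simp: xs ys)
    show "successively R (pre @ z # ws)"
      using assms(3,4) unfolding xs ys by (rule successively_splice)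
  qed simp
qed

lemma nth_take_append_drop:
  assumes "i \<le> length xs" and "j \<le> length xs"
  shows "(take i xs @ drop j xs) ! m = (if m < i then xs ! m else xs ! (m - i + j))"
  using assms by (simp add: nth_append min_def add.commute)

fun is_minus :: "'v side \<Rightarrow> bool" where
  "is_minus (Minus _) = True"
| "is_minus (Plus _) = False"

lemma badj_is_minus: "badj E x y \<Longrightarrow> is_minus x \<longleftrightarrow> \<not> is_minus y"
  unfolding badj_def by auto

lemma badj_Minus_leftE:
  assumes "badj E (Minus u) y"
  obtains a where "y = Plus a" and "bedge (Minus u) y = (a, u)"
  using assms unfolding badj_def by auto

lemma badj_Minus_rightE:
  assumes "badj E x (Minus v)"
  obtains a where "x = Plus a" and "bedge x (Minus v) = (a, v)"
  using assms unfolding badj_def by auto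

lemma badj_Plus_mem:
  assumes "badj E x y"
  shows "Plus (fst (bedge x y)) \<in> {x, y}"
  using assms unfolding badj_def by auto

lemma length_path_edges: "length (path_edges p) = length p - 1"
  unfolding path_edges_def by simp

lemma nth_path_edges: "Suc n < length p \<Longrightarrow> path_edges p ! n = bedge (p ! n) (p ! Suc n)"
  unfolding path_edges_def by (simp add: nth_tl)

lemma alt_path_altdef:
  "alt_path E M p x y \<longleftrightarrow> p \<noteq> [] \<and> hd p = x \<and> last p = y \<and> distinct p
     \<and> successively (badj E) p
     \<and> successively (\<lambda>e e'. (e \<in> M) \<noteq> (e' \<in> M)) (path_edges p)"
  unfolding alt_path_def successively_conv_nth by blast

lemma Plus_fst_mem_if_in_path_edges:
  assumes "successively (badj E) p" and "e \<in> set (path_edges p)"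
  shows "Plus (fst e) \<in> set p"
proof -
  obtain n where "n < length (path_edges p)" and e: "e = path_edges p ! n"
    using assms(2) by (metis in_set_conv_nth)
  then have n: "Suc n < length p"
    by (simp add: length_path_edges)
  have "Plus (fst e) \<in> {p ! n, p ! Suc n}"
    using badj_Plus_mem[OF successively_nth[OF assms(1) n]] e nth_path_edges[OF n] by simp
  then show ?thesis
    using n by auto
qed

lemma path_edges_disjointI:
  assumes "successively (badj E) p" and "successively (badj E') q" and "set p \<inter> set q = {}"
  shows "set (path_edges p) \<inter> set (path_edges q) = {}"
  using Plus_fst_mem_if_in_path_edges[OF assms(1)] Plus_fst_mem_if_in_path_edges[OF assms(2)]
    assms(3) by blast

text \<open>For \<open>c = True\<close> non-matching edges point from \<open>V\<^sup>-\<close> to \<open>V\<^sup>+\<close> and matching edges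
  from \<open>V\<^sup>+\<close> to \<open>V\<^sup>-\<close>; \<open>c = False\<close> reverses every arc.\<close>

definition alt_arc :: "('v \<times> 'v) set \<Rightarrow> ('v \<times> 'v) set \<Rightarrow> bool \<Rightarrow> 'v side \<Rightarrow> 'v side \<Rightarrow> bool" where
  "alt_arc E M c x y \<longleftrightarrow> badj E x y \<and> (bedge x y \<in> M \<longleftrightarrow> is_minus x \<noteq> c)"

lemma alt_path_successively_alt_arc:
  assumes p: "alt_path E M p x y" and k: "Suc k < length p"
    and arc: "alt_arc E M c (p ! k) (p ! Suc k)"
  shows "successively (alt_arc E M c) p"
proof -
  have adj: "successively (badj E) p"
    and alt: "successively (\<lambda>e e'. (e \<in> M) \<noteq> (e' \<in> M)) (path_edges p)"
    using p unfolding alt_path_altdef by auto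
  have sides: "successively (\<lambda>x y. is_minus x \<noteq> is_minus y) p"
    using adj by (rule successively_mono) (simp add: badj_is_minus)
  show ?thesis
    unfolding successively_conv_nth
  proof (intro allI impI)
    fix n assume n: "Suc n < length p"
    have "is_minus (p ! n) \<longleftrightarrow> (is_minus (p ! k) \<longleftrightarrow> even (n + k))"
      using successively_neq_nth_iff[OF sides, of n k] n k by simp
    moreover have "bedge (p ! n) (p ! Suc n) \<in> M
        \<longleftrightarrow> (bedge (p ! k) (p ! Suc k) \<in> M \<longleftrightarrow> even (n + k))"
      using successively_neq_nth_iff[OF alt, of n k] n k
      by (simp add: length_path_edges nth_path_edges)
    moreover have "bedge (p ! k) (p ! Suc k) \<in> M \<longleftrightarrow> is_minus (p ! k) \<noteq> c"
      using arc by (simp add: alt_arc_def)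
    ultimately have "bedge (p ! n) (p ! Suc n) \<in> M \<longleftrightarrow> is_minus (p ! n) \<noteq> c"
      by argo
    then show "alt_arc E M c (p ! n) (p ! Suc n)"
      using successively_nth[OF adj n] by (simp add: alt_arc_def)
  qed
qed

lemma alt_path_from_uncovered:
  assumes p: "alt_path E M p (Minus u) y" and u: "\<forall>w. (w, u) \<notin> M"
  shows "successively (alt_arc E M True) p"
proof (cases "Suc 0 < length p")
  case True
  have "p ! 0 = Minus u"
    using p by (metis alt_path_def hd_conv_nth)
  moreover have "badj E (p ! 0) (p ! Suc 0)"
    using p True unfolding alt_path_def by blast
  ultimately have adj: "badj E (Minus u) (p ! Suc 0)"
    by simp
  then obtain a where "bedge (Minus u) (p ! Suc 0) = (a, u)"
    by (rule badj_Minus_leftE)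
  then have "alt_arc E M True (p ! 0) (p ! Suc 0)"
    using adj u \<open>p ! 0 = Minus u\<close> by (simp add: alt_arc_def)
  then show ?thesis
    by (rule alt_path_successively_alt_arc[OF p True])
qed (simp add: successively_conv_nth)

lemma alt_path_to_uncovered:
  assumes p: "alt_path E M p x (Minus v)" and v: "\<forall>w. (w, v) \<notin> M"
  shows "successively (alt_arc E M False) p"
proof (cases "Suc 0 < length p")
  case True
  define k where "k = length p - 2"
  have k: "Suc k < length p" and "Suc k = length p - 1"
    using True by (simp_all add: k_def)
  then have last: "p ! Suc k = Minus v"
    using p by (metis alt_path_def last_conv_nth)
  have "badj E (p ! k) (p ! Suc k)"
    using p k unfolding alt_path_def by blast
  then have adj: "badj E (p ! k) (Minus v)"
    by (simp add: last)
  then obtain a where "p ! k = Plus a" and "bedge (p ! k) (Minus v) = (a, v)"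
    by (rule badj_Minus_rightE)
  then have "alt_arc E M False (p ! k) (p ! Suc k)"
    using adj v last by (simp add: alt_arc_def)
  then show ?thesis
    by (rule alt_path_successively_alt_arc[OF p k])
qed (simp add: successively_conv_nth)

lemma successively_alt_arc_alt_path:
  assumes "p \<noteq> []" and "distinct p" and arcs: "successively (alt_arc E M c) p"
  shows "alt_path E M p (hd p) (last p)"
proof -
  have "successively (badj E) p"
    using arcs by (rule successively_mono) (simp add: alt_arc_def)
  moreover have "successively (\<lambda>e e'. (e \<in> M) \<noteq> (e' \<in> M)) (path_edges p)"
    unfolding successively_conv_nth
  proof (intro allI impI)
    fix i assume "Suc i < length (path_edges p)"
    then have i: "Suc (Suc i) < length p"
      by (simp add: length_path_edges)
    have arc1: "alt_arc E M c (p ! i) (p ! Suc i)"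
      and arc2: "alt_arc E M c (p ! Suc i) (p ! Suc (Suc i))"
      using successively_nth[OF arcs] i by auto
    then have "bedge (p ! i) (p ! Suc i) \<in> M \<longleftrightarrow> is_minus (p ! i) \<noteq> c"
      and "bedge (p ! Suc i) (p ! Suc (Suc i)) \<in> M \<longleftrightarrow> is_minus (p ! Suc i) \<noteq> c"
      and "is_minus (p ! i) \<longleftrightarrow> \<not> is_minus (p ! Suc i)"
      unfolding alt_arc_def using badj_is_minus by blast+
    then show "(path_edges p ! i \<in> M) \<noteq> (path_edges p ! Suc i \<in> M)"
      unfolding nth_path_edges[OF Suc_lessD[OF i]] nth_path_edges[OF i] by argo
  qed
  ultimately show ?thesis
    using assms unfolding alt_path_altdef by simp
qed

lemma alt_path_splice:
  assumes p: "alt_path E M p x y" and q: "alt_path E M q x' y'"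
    and "successively (alt_arc E M c) p" and "successively (alt_arc E M c) q"
    and "set p \<inter> set q \<noteq> {}"
  obtains r where "alt_path E M r x y'"
proof -
  have "distinct p" "distinct q" "hd p = x" "last q = y'"
    using p q unfolding alt_path_def by auto
  obtain r where "r \<noteq> []" "hd r = x" "last r = y'" "distinct r" "successively (alt_arc E M c) r"
    using distinct_successively_splice[OF \<open>distinct p\<close> \<open>distinct q\<close> assms(3-5)]
      \<open>hd p = x\<close> \<open>last q = y'\<close> by metis
  then show ?thesis
    using that successively_alt_arc_alt_path by metis
qed

lemma admissible_shortcut:
  assumes "admissible V E1 E2 M1 M2 u l v" and "admissible V E1 E2 M1 M2 u' l v'"
    and "alt_path (lay l E1 E2) (lay l M1 M2) r (Minus u) (Minus v')"
  shows "admissible V E1 E2 M1 M2 u l v'"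
proof -
  have "l = 1 \<and> u \<in> Dset V M1 \<and> v' \<notin> Dset V M1 \<or> l = 2 \<and> u \<notin> Dset V M2 \<and> v' \<in> Dset V M2"
    using assms(1,2) unfolding admissible_def by (cases "l = 1") simp_all
  then show ?thesis
    using assms unfolding admissible_def by blast
qed

lemma admissible_take_append_drop:
  assumes adm: "\<And>m. m < length ls \<Longrightarrow> admissible V E1 E2 M1 M2 (vs ! m) (ls ! m) (vs ! Suc m)"
    and len: "length vs = Suc (length ls)" and ij: "i < j" "j < length ls"
    and l: "ls ! i = ls ! j"
    and r: "alt_path (lay (ls ! i) E1 E2) (lay (ls ! i) M1 M2) r (Minus (vs ! i)) (Minus (vs ! Suc j))"
    and m: "m < length (take i ls @ drop j ls)"
  shows "admissible V E1 E2 M1 M2 ((take (Suc i) vs @ drop (Suc j) vs) ! m)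
           ((take i ls @ drop j ls) ! m) ((take (Suc i) vs @ drop (Suc j) vs) ! Suc m)"
proof -
  define vs' where "vs' = take (Suc i) vs @ drop (Suc j) vs"
  define ls' where "ls' = take i ls @ drop j ls"
  have vs'_nth: "vs' ! n = (if n < Suc i then vs ! n else vs ! (n - Suc i + Suc j))" for n
    using ij len unfolding vs'_def by (simp add: nth_take_append_drop)
  have ls'_nth: "ls' ! n = (if n < i then ls ! n else ls ! (n - i + j))" for n
    using ij unfolding ls'_def by (simp add: nth_take_append_drop)
  consider "m < i" | "m = i" | "i < m"
    by linarith
  then have "admissible V E1 E2 M1 M2 (vs' ! m) (ls' ! m) (vs' ! Suc m)"
  proof cases
    case 1
    then show ?thesis
      using adm[of m] ij by (simp add: vs'_nth ls'_nth)
  next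
    case 2
    have "admissible V E1 E2 M1 M2 (vs ! i) (ls ! i) (vs ! Suc i)"
      and "admissible V E1 E2 M1 M2 (vs ! j) (ls ! i) (vs ! Suc j)"
      using adm[of i] adm[of j] ij l by simp_all
    then have "admissible V E1 E2 M1 M2 (vs ! i) (ls ! i) (vs ! Suc j)"
      using r by (rule admissible_shortcut)
    then show ?thesis
      using 2 l by (simp add: vs'_nth ls'_nth)
  next
    case 3
    define k where "k = m - i + j"
    have idx: "m - Suc i + Suc j = k" "Suc m - Suc i + Suc j = Suc k" "m - i + j = k"
      unfolding k_def using 3 by linarith+
    have "k < length ls"
      using m ij 3 unfolding k_def by simp
    moreover have "vs' ! m = vs ! k" "vs' ! Suc m = vs ! Suc k" "ls' ! m = ls ! k"
      using 3 unfolding vs'_nth ls'_nth idx by simp_all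
    ultimately show ?thesis
      using adm[of k] by simp
  qed
  then show ?thesis
    unfolding vs'_def ls'_def .
qed

lemma is_CLAP_shortcut:
  assumes C: "is_CLAP V E1 E2 M1 M2 vs ls" and ij: "i < j" "j < length ls"
    and l: "ls ! i = ls ! j"
    and r: "alt_path (lay (ls ! i) E1 E2) (lay (ls ! i) M1 M2) r (Minus (vs ! i)) (Minus (vs ! Suc j))"
  shows "is_CLAP V E1 E2 M1 M2 (take (Suc i) vs @ drop (Suc j) vs) (take i ls @ drop j ls)"
proof -
  define vs' where "vs' = take (Suc i) vs @ drop (Suc j) vs"
  define ls' where "ls' = take i ls @ drop j ls"
  have len: "length vs = Suc (length ls)" and "distinct vs"
    and ends: "hd vs \<in> Dset V M1 - Dset V M2" "last vs \<in> Dset V M2 - Dset V M1"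
    and alt: "\<forall>m. Suc m < length ls \<longrightarrow> ls ! Suc m \<noteq> ls ! m"
    and adm: "\<And>m. m < length ls \<Longrightarrow> admissible V E1 E2 M1 M2 (vs ! m) (ls ! m) (vs ! Suc m)"
    using C unfolding is_CLAP_def by auto
  have "length vs' = Suc (length ls')"
    using ij len unfolding vs'_def ls'_def by auto
  moreover have "hd vs' = hd vs" "last vs' = last vs"
    using ij len unfolding vs'_def by (simp_all add: hd_append)
  moreover have "distinct vs'"
    using \<open>distinct vs\<close> ij set_take_disj_set_drop_if_distinct[of vs "Suc i" "Suc j"]
    unfolding vs'_def by simp
  moreover have "successively (\<noteq>) ls"
    using alt by (auto simp: successively_conv_nth)
  then have "successively (\<noteq>) ls'"
    unfolding ls'_def using ij l by (intro successively_take_append_drop) auto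
  then have "\<forall>m. Suc m < length ls' \<longrightarrow> ls' ! Suc m \<noteq> ls' ! m"
    by (auto simp: successively_conv_nth)
  moreover have "\<forall>m < length ls'. admissible V E1 E2 M1 M2 (vs' ! m) (ls' ! m) (vs' ! Suc m)"
    using admissible_take_append_drop[OF adm len ij l r] unfolding vs'_def ls'_def by blast
  ultimately show ?thesis
    using ends unfolding is_CLAP_def vs'_def[symmetric] ls'_def[symmetric] by simp
qed

lemma shortest_CLAP_same_layer_witnesses_disjoint:
  assumes S: "is_shortest_CLAP V E1 E2 M1 M2 vs ls"
    and ij: "i < j" "j < length ls" and l: "ls ! i = ls ! j"
    and p: "alt_path (lay (ls ! i) E1 E2) (lay (ls ! i) M1 M2) p (Minus (vs ! i)) (Minus (vs ! Suc i))"
    and q: "alt_path (lay (ls ! i) E1 E2) (lay (ls ! i) M1 M2) q (Minus (vs ! j)) (Minus (vs ! Suc j))"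
  shows "set p \<inter> set q = {}"
proof (rule ccontr)
  assume meet: "set p \<inter> set q \<noteq> {}"
  let ?E = "lay (ls ! i) E1 E2" and ?M = "lay (ls ! i) M1 M2"
  have C: "is_CLAP V E1 E2 M1 M2 vs ls"
    using S unfolding is_shortest_CLAP_def by blast
  have adm: "admissible V E1 E2 M1 M2 (vs ! i) (ls ! i) (vs ! Suc i)"
    "admissible V E1 E2 M1 M2 (vs ! j) (ls ! i) (vs ! Suc j)"
    using C ij unfolding is_CLAP_def by (auto simp: l[symmetric])
  obtain c where "successively (alt_arc ?E ?M c) p" and "successively (alt_arc ?E ?M c) q"
  proof (cases "ls ! i = 1")
    case True
    then have "\<forall>w. (w, vs ! i) \<notin> ?M" "\<forall>w. (w, vs ! j) \<notin> ?M"
      using adm unfolding admissible_def Dset_def lay_def by auto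
    then show ?thesis
      using that alt_path_from_uncovered p q by metis
  next
    case False
    then have "\<forall>w. (w, vs ! Suc i) \<notin> ?M" "\<forall>w. (w, vs ! Suc j) \<notin> ?M"
      using adm unfolding admissible_def Dset_def lay_def by auto
    then show ?thesis
      using that alt_path_to_uncovered p q by metis
  qed
  then obtain r where "alt_path ?E ?M r (Minus (vs ! i)) (Minus (vs ! Suc j))"
    using alt_path_splice[OF p q _ _ meet] by metis
  then have "is_CLAP V E1 E2 M1 M2 (take (Suc i) vs @ drop (Suc j) vs) (take i ls @ drop j ls)"
    by (rule is_CLAP_shortcut[OF C ij l])
  then have "length ls \<le> length (take i ls @ drop j ls)"
    using S unfolding is_shortest_CLAP_def by blast
  then show False
    using ij by simp
qed

theorem mainTheorem5:
  fixes V :: "'v set" and E1 E2 M1 M2 :: "('v \<times> 'v) set"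
    and vs :: "'v list" and ls :: "nat list"
  assumes "finite V"
    and "E1 \<subseteq> V \<times> V" and "E2 \<subseteq> V \<times> V"
    and "is_matching E1 M1" and "is_matching E2 M2"
    and "is_shortest_CLAP V E1 E2 M1 M2 vs ls"
  shows "\<exists>ps :: 'v side list list. length ps = length ls \<and>
           (\<forall>i < length ls. alt_path (lay (ls ! i) E1 E2) (lay (ls ! i) M1 M2) (ps ! i)
                               (Minus (vs ! i)) (Minus (vs ! Suc i))) \<and>
           (\<forall>i < length ls. \<forall>j < length ls. i \<noteq> j \<longrightarrow> ls ! i = ls ! j \<longrightarrow>
               set (path_edges (ps ! i)) \<inter> set (path_edges (ps ! j)) = {})"
proof -
  let ?witness = "\<lambda>i p. alt_path (lay (ls ! i) E1 E2) (lay (ls ! i) M1 M2) p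
                                  (Minus (vs ! i)) (Minus (vs ! Suc i))"
  have "\<forall>i < length ls. \<exists>p. ?witness i p"
    using assms(6) unfolding is_shortest_CLAP_def is_CLAP_def admissible_def by blast
  then obtain W where W: "\<And>i. i < length ls \<Longrightarrow> ?witness i (W i)"
    by metis
  have vertex_disjoint: "set (W i) \<inter> set (W j) = {}"
    if "i < j" "j < length ls" "ls ! i = ls ! j" for i j
    using shortest_CLAP_same_layer_witnesses_disjoint[OF assms(6) that] W[of i] W[of j] that
    by simp
  have "set (path_edges (W i)) \<inter> set (path_edges (W j)) = {}"
    if "i < length ls" "j < length ls" "i \<noteq> j" "ls ! i = ls ! j" for i j
  proof (rule path_edges_disjointI)
    show "successively (badj (lay (ls ! i) E1 E2)) (W i)"
      and "successively (badj (lay (ls ! j) E1 E2)) (W j)"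
      using W that unfolding alt_path_altdef by blast+
    show "set (W i) \<inter> set (W j) = {}"
      using vertex_disjoint[of i j] vertex_disjoint[of j i] that
      by (cases "i < j") (auto simp: Int_commute)
  qed
  with W show ?thesis
    by (intro exI[of _ "map W [0..<length ls]"]) simp
qed

end
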